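(* Let $t$ be a positive integer and let $G$ be a graph on $4t-1$ vertices with $\alpha(G)=2$ and $\mathrm{cm}(G)\le t-1$. For any disjoint subsets $A,B\subseteq V(G)$ with $|A|\le |B|=t-1$, the bipartite subgraph $H$ of $G$ formed by the edges of $G$ between $A$ and $B$ contains a matching of size $|A|$.
   Context: All graphs are finite and simple. $\alpha(G)$ is the independence number. A matching $M$ in $G$ is connected if for every two edges of $M$ there is an edge of $G$ joining an endpoint of one to an endpoint of the other; $\mathrm{cm}(G)$ is the maximum size of a connected matching in $G$. *)

theory Defs
  imports Main
begin

definition simple_graph :: "'a set \<Rightarrow> 'a set set \<Rightarrow> bool" where
  "simple_graph V E \<longleftrightarrow> finite V \<and> (\<forall>e\<in>E. e \<subseteq> V \<and> card e = 2)"

definition indep_set :: "'a set \<Rightarrow> 'a set set \<Rightarrow> 'a set \<Rightarrow> bool" where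
  "indep_set V E S \<longleftrightarrow> S \<subseteq> V \<and> (\<forall>u\<in>S. \<forall>v\<in>S. {u, v} \<notin> E)"

definition indep_number :: "'a set \<Rightarrow> 'a set set \<Rightarrow> nat" where
  "indep_number V E = Max (card ` {S. indep_set V E S})"

definition matching :: "'a set set \<Rightarrow> 'a set set \<Rightarrow> bool" where
  "matching E M \<longleftrightarrow> M \<subseteq> E \<and> (\<forall>e1\<in>M. \<forall>e2\<in>M. e1 \<noteq> e2 \<longrightarrow> e1 \<inter> e2 = {})"

definition connected_matching :: "'a set set \<Rightarrow> 'a set set \<Rightarrow> bool" where
  "connected_matching E M \<longleftrightarrow> matching E M \<and>
     (\<forall>e1\<in>M. \<forall>e2\<in>M. e1 \<noteq> e2 \<longrightarrow> (\<exists>u\<in>e1. \<exists>v\<in>e2. {u, v} \<in> E))"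

definition cm :: "'a set set \<Rightarrow> nat" where
  "cm E = Max (card ` {M. connected_matching E M})"

definition between_edges :: "'a set set \<Rightarrow> 'a set \<Rightarrow> 'a set \<Rightarrow> 'a set set" where
  "between_edges E A B = {e \<in> E. \<exists>a\<in>A. \<exists>b\<in>B. e = {a, b}}"

end

theory Submission
  imports Defs
begin

(* Hall's theorem reduces the claim to excluding a nonempty T in A with |T| < t that is
   anticomplete (joined by no edge) to some Q with |T| + |Q| >= t.  As alpha(G) = 2, every
   non-neighbourhood is a clique, and a clique on 2t vertices, or a clique on t vertices whose
   members have distinct neighbours outside it, would carry a connected matching of size t;
   hence every non-neighbourhood has fewer than t vertices.  If P and Q are anticomplete with
   |P| + |Q| = t, then P and Q are cliques and each of the remaining 3t - 1 vertices is complete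
   to P or to Q.  Were many of them complete to P, Hall's theorem would give the vertices of P
   distinct neighbours among the remaining vertices and those of Q distinct neighbours complete
   to P: again a connected matching of size t.  Applying this to P and to Q, the two counts
   cannot cover all 3t - 1 vertices. *)

definition hall_condition :: "'a set \<Rightarrow> ('a \<Rightarrow> 'b set) \<Rightarrow> bool" where
  "hall_condition S N \<longleftrightarrow> (\<forall>T\<subseteq>S. card T \<le> card (\<Union>(N ` T)))"

lemma hall_condition_subset: "hall_condition S N \<Longrightarrow> T \<subseteq> S \<Longrightarrow> hall_condition T N"
  unfolding hall_condition_def by blast

lemma hall_condition_card_pos:
  assumes "hall_condition S N" "s \<in> S"
  shows "0 < card (N s)"
proof -
  have "card {s} \<le> card (\<Union>(N ` {s}))"
    using assms unfolding hall_condition_def by blast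
  then show ?thesis by simp
qed

lemma hall_condition_remove:
  assumes hall: "hall_condition S N"
    and slack: "\<And>T. T \<subseteq> S \<Longrightarrow> T \<noteq> {} \<Longrightarrow> T \<noteq> S \<Longrightarrow> card T < card (\<Union>(N ` T))"
    and "x \<in> S"
  shows "hall_condition (S - {x}) (\<lambda>s. N s - {y})"
  unfolding hall_condition_def
proof (intro allI impI)
  fix T assume T: "T \<subseteq> S - {x}"
  show "card T \<le> card (\<Union>s\<in>T. N s - {y})"
  proof (cases "T = {}")
    case False
    with T \<open>x \<in> S\<close> have "card T < card (\<Union>(N ` T))" by (intro slack) auto
    then have "card T \<le> card (\<Union>(N ` T)) - 1" by linarith
    also have "\<dots> \<le> card (\<Union>(N ` T) - {y})" by (simp add: card_Diff_singleton_if)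
    also have "\<Union>(N ` T) - {y} = (\<Union>s\<in>T. N s - {y})" by blast
    finally show ?thesis .
  qed simp
qed

lemma hall_condition_contract:
  assumes hall: "hall_condition S N" and "finite S" and "T \<subseteq> S"
    and tight: "card (\<Union>(N ` T)) \<le> card T"
  shows "hall_condition (S - T) (\<lambda>s. N s - \<Union>(N ` T))"
  unfolding hall_condition_def
proof (intro allI impI)
  fix U assume U: "U \<subseteq> S - T"
  have fin: "finite U" "finite T"
    using U \<open>T \<subseteq> S\<close> \<open>finite S\<close> by (auto intro: finite_subset)
  have fin_NT: "finite (\<Union>(N ` T))"
    using fin \<open>T \<subseteq> S\<close> hall_condition_card_pos[OF hall] card_ge_0_finite by blast
  have "card U + card T = card (U \<union> T)"
    using U fin by (subst card_Un_disjoint) auto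
  also have "\<dots> \<le> card (\<Union>(N ` (U \<union> T)))"
    using hall U \<open>T \<subseteq> S\<close> unfolding hall_condition_def by blast
  finally have "card U \<le> card (\<Union>(N ` (U \<union> T))) - card (\<Union>(N ` T))"
    using tight by linarith
  also have "\<dots> \<le> card (\<Union>(N ` (U \<union> T)) - \<Union>(N ` T))"
    using fin_NT by (rule diff_card_le_card_Diff)
  also have "\<Union>(N ` (U \<union> T)) - \<Union>(N ` T) = (\<Union>s\<in>U. N s - \<Union>(N ` T))" by blast
  finally show "card U \<le> card (\<Union>s\<in>U. N s - \<Union>(N ` T))" .
qed

definition distinct_reps :: "('a \<Rightarrow> 'b) \<Rightarrow> 'a set \<Rightarrow> ('a \<Rightarrow> 'b set) \<Rightarrow> bool" where
  "distinct_reps f S N \<longleftrightarrow> inj_on f S \<and> (\<forall>s\<in>S. f s \<in> N s)"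

lemma distinct_reps_fun_upd:
  assumes "distinct_reps f (S - {x}) (\<lambda>s. N s - {y})" "y \<in> N x"
  shows "distinct_reps (f(x := y)) S N"
  using assms unfolding distinct_reps_def by (auto simp: inj_on_def)

lemma distinct_reps_glue:
  assumes "T \<subseteq> S" and f1: "distinct_reps f1 T N"
    and f2: "distinct_reps f2 (S - T) (\<lambda>s. N s - \<Union>(N ` T))"
  shows "distinct_reps (\<lambda>s. if s \<in> T then f1 s else f2 s) S N"
proof -
  have "f1 ` T \<subseteq> \<Union>(N ` T)" "f2 ` (S - T) \<inter> \<Union>(N ` T) = {}"
    using f1 f2 unfolding distinct_reps_def by auto
  then have "f1 ` T \<inter> f2 ` (S - T) = {}" by blast
  then have "inj_on (\<lambda>s. if s \<in> T then f1 s else f2 s) (T \<union> (S - T))"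
    using f1 f2 unfolding distinct_reps_def by (intro inj_on_disjoint_Un) auto
  then have "inj_on (\<lambda>s. if s \<in> T then f1 s else f2 s) S"
    using assms(1) by (simp add: Un_absorb1)
  then show ?thesis using f1 f2 unfolding distinct_reps_def by simp
qed

theorem hall_marriage:
  assumes "finite S" "hall_condition S N"
  shows "\<exists>f. distinct_reps f S N"
  using assms
proof (induction "card S" arbitrary: S N rule: less_induct)
  case less
  consider "S = {}"
    | (slack) "S \<noteq> {}" "\<And>T. T \<subseteq> S \<Longrightarrow> T \<noteq> {} \<Longrightarrow> T \<noteq> S \<Longrightarrow> card T < card (\<Union>(N ` T))"
    | (tight) T where "T \<subseteq> S" "T \<noteq> {}" "T \<noteq> S" "card (\<Union>(N ` T)) \<le> card T"
    by (meson not_le)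
  then show ?case
  proof cases
    case slack
    then obtain x where x: "x \<in> S" by blast
    obtain y where y: "y \<in> N x"
      using hall_condition_card_pos[OF less.prems(2) x] by fastforce
    have "card (S - {x}) < card S" using less.prems(1) x by (rule card_Diff1_less)
    then obtain f where "distinct_reps f (S - {x}) (\<lambda>s. N s - {y})"
      using less.hyps[of "S - {x}" "\<lambda>s. N s - {y}"] less.prems(1)
        hall_condition_remove[OF less.prems(2) slack(2) x] by blast
    then show ?thesis using y by (blast intro: distinct_reps_fun_upd)
  next
    case tight
    have "finite T" using tight(1) less.prems(1) by (rule finite_subset)
    have "T \<subset> S" "S - T \<subset> S" using tight(1-3) by auto
    then have "card T < card S" "card (S - T) < card S"
      using less.prems(1) by (auto intro: psubset_card_mono)
    then obtain f1 f2 where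
      "distinct_reps f1 T N" "distinct_reps f2 (S - T) (\<lambda>s. N s - \<Union>(N ` T))"
      using less.hyps[of T N] less.hyps[of "S - T" "\<lambda>s. N s - \<Union>(N ` T)"]
        less.prems(1) \<open>finite T\<close> hall_condition_subset[OF less.prems(2) tight(1)]
        hall_condition_contract[OF less.prems(2) less.prems(1) tight(1,4)]
      by blast
    then show ?thesis using tight(1) by (blast intro: distinct_reps_glue)
  qed (simp add: distinct_reps_def)
qed

lemma hall_condition_extend:
  assumes hall: "hall_condition Q N" and fin: "finite (P \<union> Q)"
    and large: "\<And>a. a \<in> P \<Longrightarrow> finite (N a) \<and> card (P \<union> Q) \<le> card (N a)"
  shows "hall_condition (P \<union> Q) N"
  unfolding hall_condition_def
proof (intro allI impI)
  fix T assume T: "T \<subseteq> P \<union> Q"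
  show "card T \<le> card (\<Union>(N ` T))"
  proof (cases "T \<inter> P = {}")
    case True
    then show ?thesis using hall T unfolding hall_condition_def by blast
  next
    case False
    then obtain a where a: "a \<in> T" "a \<in> P" by blast
    have "finite (N s)" if "s \<in> T" for s
      using that T large hall_condition_card_pos[OF hall] card_ge_0_finite by blast
    then have "finite (\<Union>(N ` T))" using T fin by (auto intro: finite_subset)
    have "card T \<le> card (P \<union> Q)" using T fin by (rule card_mono[rotated])
    also have "\<dots> \<le> card (N a)" using large a(2) by blast
    also have "\<dots> \<le> card (\<Union>(N ` T))"
      using \<open>finite (\<Union>(N ` T))\<close> a(1) by (auto intro: card_mono)
    finally show ?thesis .
  qed
qed

lemma hall_condition_if_card_le:
  assumes "finite S" "\<And>s. s \<in> S \<Longrightarrow> finite (N s) \<and> card S \<le> card (N s)"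
  shows "hall_condition S N"
  using hall_condition_extend[of "{}" N S] assms by (simp add: hall_condition_def)

lemma card_le_indep_number:
  assumes "simple_graph V E" "indep_set V E S"
  shows "card S \<le> indep_number V E"
proof -
  have "{S. indep_set V E S} \<subseteq> Pow V" by (auto simp: indep_set_def)
  moreover have "finite (Pow V)" using assms(1) by (simp add: simple_graph_def)
  ultimately have "finite {S. indep_set V E S}" by (rule finite_subset)
  then show ?thesis
    unfolding indep_number_def using assms(2) by (intro Max_ge finite_imageI) auto
qed

lemma card_le_cm:
  assumes "simple_graph V E" "connected_matching E M"
  shows "card M \<le> cm E"
proof -
  have "E \<subseteq> Pow V" using assms(1) by (auto simp: simple_graph_def)
  then have "{M. connected_matching E M} \<subseteq> Pow (Pow V)"
    by (auto simp: connected_matching_def matching_def)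
  moreover have "finite (Pow (Pow V))" using assms(1) by (simp add: simple_graph_def)
  ultimately have "finite {M. connected_matching E M}" by (rule finite_subset)
  then show ?thesis
    unfolding cm_def using assms(2) by (intro Max_ge finite_imageI) auto
qed

lemma pairs_disjoint:
  assumes "inj_on f S" "f ` S \<inter> S = {}" "s1 \<in> S" "s2 \<in> S" "s1 \<noteq> s2"
  shows "{s1, f s1} \<inter> {s2, f s2} = {}"
  using assms by (auto dest: inj_onD)

lemma matching_pairs:
  assumes "inj_on f S" "f ` S \<inter> S = {}" "\<forall>s\<in>S. {s, f s} \<in> E"
  shows "matching E ((\<lambda>s. {s, f s}) ` S)"
  unfolding matching_def
proof (intro conjI ballI impI)
  show "(\<lambda>s. {s, f s}) ` S \<subseteq> E" using assms(3) by blast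
next
  fix e1 e2 assume "e1 \<in> (\<lambda>s. {s, f s}) ` S" "e2 \<in> (\<lambda>s. {s, f s}) ` S" "e1 \<noteq> e2"
  then obtain s1 s2 where "s1 \<in> S" "s2 \<in> S" "s1 \<noteq> s2" "e1 = {s1, f s1}" "e2 = {s2, f s2}"
    by blast
  then show "e1 \<inter> e2 = {}" using pairs_disjoint[OF assms(1,2)] by simp
qed

lemma card_pairs:
  assumes "inj_on f S" "f ` S \<inter> S = {}"
  shows "card ((\<lambda>s. {s, f s}) ` S) = card S"
proof (rule card_image, rule inj_onI)
  fix s1 s2 assume "s1 \<in> S" "s2 \<in> S" "{s1, f s1} = {s2, f s2}"
  then show "s1 = s2" using pairs_disjoint[OF assms] by blast
qed

lemma connected_matching_pairs:
  assumes "inj_on f S" "f ` S \<inter> S = {}" "\<forall>s\<in>S. {s, f s} \<in> E"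
    and connected: "\<And>s1 s2. s1 \<in> S \<Longrightarrow> s2 \<in> S \<Longrightarrow> s1 \<noteq> s2 \<Longrightarrow>
      \<exists>u\<in>{s1, f s1}. \<exists>v\<in>{s2, f s2}. {u, v} \<in> E"
  shows "connected_matching E ((\<lambda>s. {s, f s}) ` S)"
  unfolding connected_matching_def
proof (intro conjI ballI impI)
  show "matching E ((\<lambda>s. {s, f s}) ` S)" using assms(1-3) by (rule matching_pairs)
next
  fix e1 e2 assume "e1 \<in> (\<lambda>s. {s, f s}) ` S" "e2 \<in> (\<lambda>s. {s, f s}) ` S" "e1 \<noteq> e2"
  then obtain s1 s2 where "s1 \<in> S" "s2 \<in> S" "s1 \<noteq> s2" "e1 = {s1, f s1}" "e2 = {s2, f s2}"
    by blast
  then show "\<exists>u\<in>e1. \<exists>v\<in>e2. {u, v} \<in> E" using connected by simp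
qed

definition clique :: "'a set set \<Rightarrow> 'a set \<Rightarrow> bool" where
  "clique E K \<longleftrightarrow> (\<forall>u\<in>K. \<forall>v\<in>K. u \<noteq> v \<longrightarrow> {u, v} \<in> E)"

lemma clique_subset: "clique E K \<Longrightarrow> L \<subseteq> K \<Longrightarrow> clique E L"
  unfolding clique_def by blast

lemma clique_connected_matching:
  assumes "clique E K" "finite K"
  obtains M where "connected_matching E M" "card M = card K div 2"
proof -
  have "card K div 2 \<le> card K" by simp
  then obtain S where S: "S \<subseteq> K" "card S = card K div 2" and "finite S"
    by (rule obtain_subset_with_card_n)
  have "card (K - S) = card K - card S" using \<open>finite S\<close> S(1) by (rule card_Diff_subset)
  then have "card S \<le> card (K - S)" using S(2) by arith
  then obtain S' where S': "S' \<subseteq> K - S" "card S' = card S" and "finite S'"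
    by (rule obtain_subset_with_card_n)
  obtain f where "bij_betw f S S'"
    using finite_same_card_bij[OF \<open>finite S\<close> \<open>finite S'\<close>] S'(2) by auto
  then have f: "inj_on f S" "f ` S = S'" by (auto simp: bij_betw_def)
  have disj: "f ` S \<inter> S = {}" using f(2) S'(1) by blast
  have "connected_matching E ((\<lambda>s. {s, f s}) ` S)"
  proof (rule connected_matching_pairs[OF f(1) disj])
    show "\<forall>s\<in>S. {s, f s} \<in> E"
    proof
      fix s assume "s \<in> S"
      then have "f s \<in> K" "s \<noteq> f s" using f(2) S'(1) by auto
      then show "{s, f s} \<in> E" using assms(1) S(1) \<open>s \<in> S\<close> unfolding clique_def by blast
    qed
    show "\<exists>u\<in>{s1, f s1}. \<exists>v\<in>{s2, f s2}. {u, v} \<in> E" if "s1 \<in> S" "s2 \<in> S" "s1 \<noteq> s2" for s1 s2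
      using assms(1) S(1) that unfolding clique_def by blast
  qed
  moreover have "card ((\<lambda>s. {s, f s}) ` S) = card K div 2"
    using card_pairs[OF f(1) disj] S(2) by simp
  ultimately show ?thesis by (rule that)
qed

definition anticomplete :: "'a set set \<Rightarrow> 'a set \<Rightarrow> 'a set \<Rightarrow> bool" where
  "anticomplete E P Q \<longleftrightarrow> (\<forall>a\<in>P. \<forall>b\<in>Q. {a, b} \<notin> E)"

lemma anticomplete_sym:
  assumes "anticomplete E P Q"
  shows "anticomplete E Q P"
  unfolding anticomplete_def
proof (intro ballI)
  fix b a assume "b \<in> Q" "a \<in> P"
  then have "{a, b} \<notin> E" using assms by (simp add: anticomplete_def)
  then show "{b, a} \<notin> E" by (simp add: insert_commute)
qed

lemma anticomplete_subset: "anticomplete E P Q \<Longrightarrow> Q' \<subseteq> Q \<Longrightarrow> anticomplete E P Q'"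
  unfolding anticomplete_def by blast

lemma card_le_card_Diff_add:
  assumes "finite N" "Y \<subseteq> N" "X \<inter> Y = {}"
  shows "card X + card Y \<le> card (X - N) + card N"
proof (cases "finite X")
  case True
  have "card X = card (X \<inter> N) + card (X - N)"
    using True by (rule card_Int_Diff)
  moreover have "card (X \<inter> N) + card Y = card ((X \<inter> N) \<union> Y)"
    using assms True finite_subset[OF assms(2,1)] by (subst card_Un_disjoint) auto
  moreover have "card ((X \<inter> N) \<union> Y) \<le> card N"
    using assms by (intro card_mono) auto
  ultimately show ?thesis by linarith
next
  case False
  then show ?thesis using assms by (simp add: card_mono)
qed

locale alpha2_cm_graph =
  fixes V :: "'a set" and E :: "'a set set" and t :: nat
  assumes simple: "simple_graph V E"
    and t_pos: "1 \<le> t"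
    and card_V: "card V = 4 * t - 1"
    and indep_number_le: "indep_number V E \<le> 2"
    and cm_le: "cm E \<le> t - 1"
begin

lemma finite_V: "finite V"
  using simple by (simp add: simple_graph_def)

lemma edge_among_three:
  assumes "x \<in> V" "y \<in> V" "z \<in> V" "x \<noteq> y" "x \<noteq> z" "y \<noteq> z"
  shows "{x, y} \<in> E \<or> {x, z} \<in> E \<or> {y, z} \<in> E"
proof (rule ccontr)
  assume "\<not> ?thesis"
  moreover have "{u} \<notin> E" for u using simple by (auto simp: simple_graph_def)
  ultimately have "indep_set V E {x, y, z}"
    using assms unfolding indep_set_def by (auto simp: insert_commute)
  then have "card {x, y, z} \<le> 2"
    using card_le_indep_number[OF simple] indep_number_le by fastforce
  then show False using assms by simp
qed

lemma connected_matching_card_le: "connected_matching E M \<Longrightarrow> card M \<le> t - 1"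
  using card_le_cm[OF simple] cm_le by fastforce

definition non_nbrs :: "'a \<Rightarrow> 'a set" where
  "non_nbrs v = {u \<in> V. u \<noteq> v \<and> {u, v} \<notin> E}"

lemma non_nbrs_subset: "non_nbrs v \<subseteq> V"
  by (auto simp: non_nbrs_def)

lemma finite_non_nbrs: "finite (non_nbrs v)"
  using finite_V non_nbrs_subset by (rule finite_subset[rotated])

lemma edge_if_notin_non_nbrs: "u \<in> V \<Longrightarrow> u \<noteq> v \<Longrightarrow> u \<notin> non_nbrs v \<Longrightarrow> {v, u} \<in> E"
  by (simp add: non_nbrs_def insert_commute)

lemma clique_non_nbrs:
  assumes "v \<in> V"
  shows "clique E (non_nbrs v)"
  unfolding clique_def
proof (intro ballI impI)
  fix u w assume "u \<in> non_nbrs v" "w \<in> non_nbrs v" "u \<noteq> w"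
  then show "{u, w} \<in> E"
    using edge_among_three[of v u w] assms by (auto simp: non_nbrs_def insert_commute)
qed

lemma clique_card_le:
  assumes "clique E K" "K \<subseteq> V"
  shows "card K \<le> 2 * t - 1"
proof -
  obtain M where "connected_matching E M" "card M = card K div 2"
    using clique_connected_matching assms finite_V finite_subset by metis
  then have "card K div 2 \<le> t - 1" using connected_matching_card_le by metis
  then show ?thesis using t_pos by linarith
qed

lemma clique_pairing_card_le:
  assumes P: "clique E P" and Q: "clique E Q"
    and f: "inj_on f (P \<union> Q)" "f ` (P \<union> Q) \<inter> (P \<union> Q) = {}" "\<forall>s\<in>P \<union> Q. {s, f s} \<in> E"
    and cross: "\<And>a b. a \<in> P \<Longrightarrow> b \<in> Q \<Longrightarrow> {a, f b} \<in> E"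
  shows "card (P \<union> Q) \<le> t - 1"
proof -
  have "connected_matching E ((\<lambda>s. {s, f s}) ` (P \<union> Q))"
  proof (rule connected_matching_pairs[OF f])
    fix s1 s2 assume s: "s1 \<in> P \<union> Q" "s2 \<in> P \<union> Q" "s1 \<noteq> s2"
    consider "s1 \<in> P" "s2 \<in> P" | "s1 \<in> Q" "s2 \<in> Q" | "s1 \<in> P" "s2 \<in> Q" | "s1 \<in> Q" "s2 \<in> P"
      using s by blast
    then show "\<exists>u\<in>{s1, f s1}. \<exists>v\<in>{s2, f s2}. {u, v} \<in> E"
    proof cases
      case 4
      then have "{f s1, s2} \<in> E" using cross by (simp add: insert_commute)
      then show ?thesis by blast
    qed (use P Q cross s(3) in \<open>auto simp: clique_def\<close>)
  qed
  then show ?thesis using connected_matching_card_le card_pairs[OF f(1,2)] by metis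
qed

lemma clique_partners_card_le:
  assumes cliques: "clique E P" "clique E Q" and "finite (P \<union> Q)" "hall_condition (P \<union> Q) C"
    and partner: "\<And>s. s \<in> P \<union> Q \<Longrightarrow> C s \<subseteq> V - (P \<union> Q) - non_nbrs s"
    and cross: "\<And>a b r. a \<in> P \<Longrightarrow> b \<in> Q \<Longrightarrow> r \<in> C b \<Longrightarrow> {a, r} \<in> E"
  shows "card (P \<union> Q) \<le> t - 1"
proof -
  obtain f where f: "inj_on f (P \<union> Q)" "\<forall>s\<in>P \<union> Q. f s \<in> C s"
    using hall_marriage[OF assms(3,4)] unfolding distinct_reps_def by blast
  then have f_partner: "f s \<in> V - (P \<union> Q) - non_nbrs s" if "s \<in> P \<union> Q" for s
    using partner that by blast
  show ?thesis
  proof (rule clique_pairing_card_le[OF cliques f(1)])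
    show "f ` (P \<union> Q) \<inter> (P \<union> Q) = {}" using f_partner by blast
    show "\<forall>s\<in>P \<union> Q. {s, f s} \<in> E"
    proof
      fix s assume "s \<in> P \<union> Q"
      then show "{s, f s} \<in> E" using f_partner[of s] by (intro edge_if_notin_non_nbrs) auto
    qed
    show "{a, f b} \<in> E" if "a \<in> P" "b \<in> Q" for a b using cross that f(2) by blast
  qed
qed

lemma card_non_nbrs_le:
  assumes v: "v \<in> V"
  shows "card (non_nbrs v) \<le> t - 1"
proof (rule ccontr)
  assume "\<not> ?thesis"
  then have "t \<le> card (non_nbrs v)" using t_pos by linarith
  then obtain S where S: "S \<subseteq> non_nbrs v" "card S = t" and fin_S: "finite S"
    by (rule obtain_subset_with_card_n)
  have SV: "S \<subseteq> V" using S(1) by (auto simp: non_nbrs_def)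
  define C where "C s = V - S - non_nbrs s" for s
  have C_bound: "finite (C s) \<and> card S \<le> card (C s)" if "s \<in> S" for s
  proof -
    have "card (V - S) \<le> card (C s) + card (non_nbrs s)"
      using card_le_card_Diff_add[OF finite_non_nbrs, of "{}"] by (simp add: C_def)
    moreover have "card (V - S) = 3 * t - 1" using SV S(2) card_V finite_V t_pos
      by (simp add: card_Diff_subset fin_S)
    moreover have "card (non_nbrs s) \<le> 2 * t - 1"
      using clique_card_le[OF clique_non_nbrs non_nbrs_subset] that SV by blast
    ultimately show ?thesis using S(2) finite_V by (simp add: C_def)
  qed
  have "hall_condition S C" using fin_S C_bound by (rule hall_condition_if_card_le)
  then have "card (S \<union> {}) \<le> t - 1"
    using clique_subset[OF clique_non_nbrs[OF v] S(1)] fin_S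
    by (intro clique_partners_card_le[of S "{}" C]) (auto simp: clique_def C_def)
  then show False using S(2) t_pos by simp
qed

lemma card_add_le_card_Diff_non_nbrs:
  assumes "v \<in> V" "Y \<subseteq> non_nbrs v" "X \<inter> Y = {}"
  shows "card X + card Y \<le> card (X - non_nbrs v) + (t - 1)"
  using card_le_card_Diff_add[OF finite_non_nbrs assms(2,3)] card_non_nbrs_le[OF assms(1)]
  by linarith

lemma anticomplete_subset_non_nbrs:
  assumes "anticomplete E P Q" "Q \<subseteq> V" "P \<inter> Q = {}" "a \<in> P"
  shows "Q \<subseteq> non_nbrs a"
  using assms by (auto simp: anticomplete_def non_nbrs_def insert_commute)

lemma clique_if_anticomplete:
  assumes "anticomplete E P Q" "P \<subseteq> V" "Q \<subseteq> V" "P \<inter> Q = {}" "Q \<noteq> {}"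
  shows "clique E P"
proof -
  obtain b where b: "b \<in> Q" using assms(5) by blast
  have "P \<subseteq> non_nbrs b"
    using assms(4) b by (intro anticomplete_subset_non_nbrs[OF anticomplete_sym[OF assms(1)] assms(2)]) auto
  then show ?thesis using clique_non_nbrs b assms(3) by (blast intro: clique_subset)
qed

lemma hall_condition_partners:
  assumes PV: "P \<subseteq> V" and QV: "Q \<subseteq> V" and PQ: "P \<inter> Q = {}"
    and anti: "anticomplete E P Q" and card_PQ: "card P + card Q = t"
    and Z: "Z \<subseteq> V - (P \<union> Q)" "t + card Q \<le> card Z + card P + 1"
  shows "hall_condition (P \<union> Q) (\<lambda>s. (if s \<in> P then V - (P \<union> Q) else Z) - non_nbrs s)"
    (is "hall_condition _ ?C")
proof -
  define R where "R = V - (P \<union> Q)"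
  have fin: "finite P" "finite Q" "finite R"
    using PV QV finite_V by (auto simp: R_def intro: finite_subset)
  have fin_C: "finite (?C s)" for s
    using fin Z(1) by (auto simp: R_def intro: finite_subset)
  have "card (P \<union> Q) = t" using fin PQ card_PQ by (simp add: card_Un_disjoint)
  then have card_R: "card R = 3 * t - 1"
    using PV QV fin(1,2) card_V t_pos by (simp add: R_def card_Diff_subset)
  have Q_bound: "card Q \<le> card (?C b)" if b: "b \<in> Q" for b
  proof -
    have "P \<subseteq> non_nbrs b"
      using PQ b by (intro anticomplete_subset_non_nbrs[OF anticomplete_sym[OF anti] PV]) auto
    moreover have "Z \<inter> P = {}" using Z(1) by blast
    ultimately have "card Z + card P \<le> card (Z - non_nbrs b) + (t - 1)"
      using b QV by (intro card_add_le_card_Diff_non_nbrs) auto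
    then show ?thesis using b PQ Z(2) t_pos by auto
  qed
  have P_bound: "card (P \<union> Q) \<le> card (?C a)" if a: "a \<in> P" for a
  proof -
    have "Q \<subseteq> non_nbrs a" using anti QV PQ a by (rule anticomplete_subset_non_nbrs)
    moreover have "R \<inter> Q = {}" by (auto simp: R_def)
    ultimately have "card R + card Q \<le> card (R - non_nbrs a) + (t - 1)"
      using a PV by (intro card_add_le_card_Diff_non_nbrs) auto
    then show ?thesis using a card_R \<open>card (P \<union> Q) = t\<close> t_pos by (simp add: R_def)
  qed
  have "hall_condition Q ?C"
    using fin(2) fin_C Q_bound by (auto intro: hall_condition_if_card_le)
  then show ?thesis by (rule hall_condition_extend) (use fin P_bound finite_V in auto)
qed

lemma card_complete_to_lt:
  assumes PV: "P \<subseteq> V" and QV: "Q \<subseteq> V" and PQ: "P \<inter> Q = {}" and "P \<noteq> {}" "Q \<noteq> {}"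
    and anti: "anticomplete E P Q" and card_PQ: "card P + card Q = t"
  shows "card {r \<in> V - (P \<union> Q). \<forall>a\<in>P. {r, a} \<in> E} + card P + 1 < t + card Q"
proof (rule ccontr)
  define Z where "Z = {r \<in> V - (P \<union> Q). \<forall>a\<in>P. {r, a} \<in> E}"
  assume big: "\<not> ?thesis"
  have "Q \<inter> P = {}" using PQ by blast
  then have "clique E P" "clique E Q"
    using clique_if_anticomplete[OF anti PV QV PQ \<open>Q \<noteq> {}\<close>]
      clique_if_anticomplete[OF anticomplete_sym[OF anti] QV PV _ \<open>P \<noteq> {}\<close>] by blast+
  moreover have "finite (P \<union> Q)" using PV QV finite_V by (auto intro: finite_subset)
  moreover have "hall_condition (P \<union> Q) (\<lambda>s. (if s \<in> P then V - (P \<union> Q) else Z) - non_nbrs s)"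
    using PV QV PQ anti card_PQ big by (intro hall_condition_partners) (auto simp: Z_def)
  ultimately have "card (P \<union> Q) \<le> t - 1"
  proof (rule clique_partners_card_le)
    show "{a, r} \<in> E" if "a \<in> P" "b \<in> Q" "r \<in> (if b \<in> P then V - (P \<union> Q) else Z) - non_nbrs b"
      for a b r
      using that PQ by (auto simp: Z_def insert_commute split: if_splits)
  qed (auto simp: Z_def)
  then show False using card_PQ PQ PV QV finite_V t_pos by (simp add: card_Un_disjoint finite_subset)
qed

lemma anticomplete_card_lt:
  assumes PV: "P \<subseteq> V" and QV: "Q \<subseteq> V" and PQ: "P \<inter> Q = {}" and "P \<noteq> {}"
    and anti: "anticomplete E P Q" and "card P < t"
  shows "card P + card Q < t"
proof (rule ccontr)
  assume "\<not> ?thesis"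
  then have "t - card P \<le> card Q" by linarith
  then obtain Q' where Q': "Q' \<subseteq> Q" "card Q' = t - card P"
    by (rule obtain_subset_with_card_n)
  have Q'V: "Q' \<subseteq> V" and PQ': "P \<inter> Q' = {}" using Q'(1) QV PQ by auto
  have "Q' \<noteq> {}" and card_PQ': "card P + card Q' = t" using Q'(2) \<open>card P < t\<close> by auto
  have anti': "anticomplete E P Q'" using anti Q'(1) by (rule anticomplete_subset)
  define R where "R = V - (P \<union> Q')"
  have "R \<subseteq> {r \<in> V - (P \<union> Q'). \<forall>a\<in>P. {r, a} \<in> E} \<union> {r \<in> V - (Q' \<union> P). \<forall>b\<in>Q'. {r, b} \<in> E}"
    (is "_ \<subseteq> ?ZP \<union> ?ZQ")
  proof
    fix r assume r: "r \<in> R"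
    have "{r, a} \<in> E \<or> {r, b} \<in> E" if "a \<in> P" "b \<in> Q'" for a b
    proof -
      have "a \<in> V" "b \<in> V" "{a, b} \<notin> E" "a \<noteq> b"
        using that PV Q'V PQ' anti' by (auto simp: anticomplete_def)
      moreover have "r \<in> V" "r \<noteq> a" "r \<noteq> b" using r that by (auto simp: R_def)
      ultimately show ?thesis using edge_among_three[of r a b] by blast
    qed
    then show "r \<in> ?ZP \<union> ?ZQ" using r by (auto simp: R_def)
  qed
  then have "card R \<le> card (?ZP \<union> ?ZQ)" by (rule card_mono[rotated]) (simp add: finite_V)
  also have "\<dots> \<le> card ?ZP + card ?ZQ" by (rule card_Un_le)
  finally have "card R \<le> card ?ZP + card ?ZQ" .
  moreover have "card R = 3 * t - 1"
    using PV Q'V PQ' card_PQ' card_V t_pos finite_V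
    by (simp add: R_def card_Diff_subset card_Un_disjoint finite_subset)
  moreover have "card ?ZP + card P + 1 < t + card Q'"
    using PV Q'V PQ' \<open>P \<noteq> {}\<close> \<open>Q' \<noteq> {}\<close> anti' card_PQ' by (rule card_complete_to_lt)
  moreover have "card ?ZQ + card Q' + 1 < t + card P"
  proof (rule card_complete_to_lt)
    show "Q' \<inter> P = {}" "card Q' + card P = t" using PQ' card_PQ' by auto
  qed (use Q'V PV \<open>Q' \<noteq> {}\<close> \<open>P \<noteq> {}\<close> anticomplete_sym[OF anti'] in auto)
  ultimately show False using t_pos by linarith
qed

lemma hall_condition_nbrs_in:
  assumes AV: "A \<subseteq> V" and BV: "B \<subseteq> V" and AB: "A \<inter> B = {}"
    and "card A \<le> card B" "card B = t - 1"
  shows "hall_condition A (\<lambda>a. {b \<in> B. {a, b} \<in> E})"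
  unfolding hall_condition_def
proof (intro allI impI)
  fix T assume T: "T \<subseteq> A"
  let ?NT = "\<Union>a\<in>T. {b \<in> B. {a, b} \<in> E}"
  show "card T \<le> card ?NT"
  proof (rule ccontr)
    assume short: "\<not> ?thesis"
    have fin: "finite A" "finite B" using AV BV finite_V by (auto intro: finite_subset)
    have "?NT \<subseteq> B" by blast
    then have "card (B - ?NT) = card B - card ?NT"
      using fin(2) by (simp add: card_Diff_subset finite_subset)
    moreover have "card T \<le> t - 1" using card_mono[OF fin(1) T] assms(4,5) by linarith
    moreover have "card T + card (B - ?NT) < t"
    proof (rule anticomplete_card_lt)
      show "anticomplete E T (B - ?NT)" by (auto simp: anticomplete_def)
      show "T \<noteq> {}" using short by auto
      show "card T < t" using \<open>card T \<le> t - 1\<close> t_pos by linarith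
    qed (use T AV BV AB in auto)
    ultimately show False using short assms(5) by linarith
  qed
qed

lemma bipartite_matching:
  assumes "A \<subseteq> V" "B \<subseteq> V" "A \<inter> B = {}" "card A \<le> card B" "card B = t - 1"
  shows "\<exists>M. matching (between_edges E A B) M \<and> card M = card A"
proof -
  have "finite A" using assms(1) finite_V by (rule finite_subset)
  then obtain g where g: "inj_on g A" "\<forall>a\<in>A. g a \<in> {b \<in> B. {a, b} \<in> E}"
    using hall_marriage[OF _ hall_condition_nbrs_in[OF assms]] unfolding distinct_reps_def by blast
  have "g ` A \<inter> A = {}" "\<forall>a\<in>A. {a, g a} \<in> between_edges E A B"
    using g(2) assms(3) by (auto simp: between_edges_def)
  then show ?thesis
    using matching_pairs[OF g(1)] card_pairs[OF g(1)] by blast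
qed

end

theorem lemma2p3:
  fixes V :: "'a set" and E :: "'a set set" and t :: nat and A B :: "'a set"
  assumes "simple_graph V E"
    and "t \<ge> 1"
    and "card V = 4 * t - 1"
    and "indep_number V E = 2"
    and "cm E \<le> t - 1"
    and "A \<subseteq> V" and "B \<subseteq> V" and "A \<inter> B = {}"
    and "card A \<le> card B" and "card B = t - 1"
  shows "\<exists>M. matching (between_edges E A B) M \<and> card M = card A"
proof -
  interpret alpha2_cm_graph V E t
    using assms(1-5) by unfold_locales simp_all
  show ?thesis using assms(6-10) by (rule bipartite_matching)
qed

end
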